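(* Let $\ell\ge 1$ be an integer and let $q_1,\dots,q_\ell:\mathbb{N}\to\mathbb{N}$ be increasing functions taking integer values on the integers, with $l\le q_1(l)<q_2(l)<\dots<q_\ell(l)$ for all $l\ge 1$. For each $n\ge1$ let $p_n\in(0,1)$ and let $\xi^{(n)}_1,\xi^{(n)}_2,\xi^{(n)}_3,\dots$ be independent random variables with $P\{\xi^{(n)}_i=1\}=p_n=1-P\{\xi^{(n)}_i=0\}$. Set $$S_n=\sum_{l=1}^n \xi^{(n)}_{q_1(l)}\xi^{(n)}_{q_2(l)}\cdots\xi^{(n)}_{q_\ell(l)},\qquad \lambda_n=np_n^\ell .$$ Then for every $\lambda>0$ and every $n\ge1$, $$\sup_{\Gamma\subset\mathbb{Z}_+}\big|P\{S_n\in\Gamma\}-P_\lambda(\Gamma)\big|\le (2\ell^2+1)p_n+2|\lambda-\lambda_n|e^{\max(\lambda,\lambda_n)},$$ where $P_\lambda(\Gamma)=\sum_{l\in\Gamma}e^{-\lambda}\lambda^l/l!$. In particular, if $\lim_{n\to\infty}np_n^\ell=\lambda>0$, the right-hand side tends to $0$ and $S_n$ converges in distribution to a Poisson random variable with parameter $\lambda$.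
   Context: $\mathbb{Z}_+$ denotes the set of nonnegative integers; $P_\lambda(\Gamma)$ is the probability assigned to $\Gamma\subset\mathbb{Z}_+$ by the Poisson distribution with parameter $\lambda$. *)

theory Defs
  imports "HOL-Probability.Probability"
begin

definition S_stat :: "nat \<Rightarrow> (nat \<Rightarrow> nat \<Rightarrow> nat) \<Rightarrow> (nat \<Rightarrow> 'a \<Rightarrow> nat) \<Rightarrow> nat \<Rightarrow> 'a \<Rightarrow> nat" where
  "S_stat ell q \<xi> n \<omega> = (\<Sum>l=1..n. \<Prod>j=1..ell. \<xi> (q j l) \<omega>)"

definition poisson_prob :: "real \<Rightarrow> nat set \<Rightarrow> real" where
  "poisson_prob lam \<Gamma> = measure_pmf.prob (poisson_pmf lam) \<Gamma>"

end

theory Submission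
  imports Defs
begin

text \<open>Write \<open>S\<^sub>n = W = \<Sum>\<^sub>l X\<^sub>l\<close>, where \<open>X\<^sub>l\<close> indicates that \<open>\<xi>\<close> is \<open>1\<close> on the \<open>\<ell>\<close>-element index set
  \<open>{q\<^sub>1(l), \<dots>, q\<^sub>\<ell>(l)}\<close>, and let \<open>\<mu> = n p^\<ell>\<close>.  For every \<open>\<Gamma>\<close> the explicit solution \<open>g\<close> of the Stein
  equation \<open>\<mu> g(k+1) - k g(k) = [k \<in> \<Gamma>] - P\<^sub>\<mu>(\<Gamma>)\<close> has increments bounded by \<open>1/\<mu>\<close>.  Hence
  \<open>P(W \<in> \<Gamma>) - P\<^sub>\<mu>(\<Gamma>) = \<Sum>\<^sub>l E[p^\<ell> g(W+1) - X\<^sub>l g(W)]\<close>; replacing \<open>W\<close> by the part \<open>Z\<^sub>l\<close> of \<open>W\<close>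
  independent of \<open>X\<^sub>l\<close> (the summands whose index sets avoid that of \<open>l\<close>, all but at most \<open>\<ell>\<^sup>2\<close>)
  costs at most \<open>\<ell>\<^sup>2 p^\<ell> (p^\<ell> + p)/\<mu>\<close> per summand, giving \<open>|P(W \<in> \<Gamma>) - P\<^sub>\<mu>(\<Gamma>)| \<le> 2\<ell>\<^sup>2 p\<close>.  A
  mean-value estimate of the Poisson weights gives \<open>|P\<^sub>\<mu>(\<Gamma>) - P\<^sub>\<lambda>(\<Gamma>)| \<le> 2 |\<lambda> - \<mu>| e^max(\<lambda>,\<mu>)\<close>.\<close>

definition exp_partial :: "real \<Rightarrow> nat \<Rightarrow> real" where
  "exp_partial \<mu> k = (\<Sum>j\<le>k. \<mu>^j / fact j)"

definition exp_partial_on :: "real \<Rightarrow> nat set \<Rightarrow> nat \<Rightarrow> real" where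
  "exp_partial_on \<mu> \<Gamma> k = (\<Sum>j\<le>k. if j \<in> \<Gamma> then \<mu>^j / fact j else 0)"

definition stein_sol :: "real \<Rightarrow> nat set \<Rightarrow> real \<Rightarrow> nat \<Rightarrow> real" where
  "stein_sol \<mu> \<Gamma> a k = (case k of 0 \<Rightarrow> 0
     | Suc m \<Rightarrow> fact m / \<mu>^Suc m * (exp_partial_on \<mu> \<Gamma> m - a * exp_partial \<mu> m))"

lemma exp_partial_Suc: "exp_partial \<mu> (Suc m) = exp_partial \<mu> m + \<mu>^Suc m / fact (Suc m)"
  by (simp add: exp_partial_def)

lemma exp_partial_on_Suc:
  "exp_partial_on \<mu> \<Gamma> (Suc m) = exp_partial_on \<mu> \<Gamma> m + (if Suc m \<in> \<Gamma> then \<mu>^Suc m / fact (Suc m) else 0)"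
  by (simp add: exp_partial_on_def)

lemma stein_equation:
  assumes "\<mu> > 0"
  shows "\<mu> * stein_sol \<mu> \<Gamma> a (Suc k) - real k * stein_sol \<mu> \<Gamma> a k = of_bool (k \<in> \<Gamma>) - a"
proof (cases k)
  case 0
  then show ?thesis using assms by (simp add: stein_sol_def exp_partial_on_def exp_partial_def)
next
  case (Suc m)
  define c where "c = fact (Suc m) / \<mu>^Suc m"
  define u where "u = \<mu>^Suc m / fact (Suc m)"
  have cu: "c * u = 1" using assms by (simp add: c_def u_def)
  have c1: "\<mu> * (fact (Suc m) / \<mu>^Suc (Suc m)) = c" using assms by (simp add: c_def)
  have c2: "real (Suc m) * (fact m / \<mu>^Suc m) = c" by (simp add: c_def)
  have "\<mu> * stein_sol \<mu> \<Gamma> a (Suc k) - real k * stein_sol \<mu> \<Gamma> a k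
      = (\<mu> * (fact (Suc m) / \<mu>^Suc (Suc m))) * (exp_partial_on \<mu> \<Gamma> (Suc m) - a * exp_partial \<mu> (Suc m))
        - (real (Suc m) * (fact m / \<mu>^Suc m)) * (exp_partial_on \<mu> \<Gamma> m - a * exp_partial \<mu> m)"
    unfolding Suc stein_sol_def by simp
  also have "\<dots> = c * (exp_partial_on \<mu> \<Gamma> (Suc m) - a * exp_partial \<mu> (Suc m))
        - c * (exp_partial_on \<mu> \<Gamma> m - a * exp_partial \<mu> m)"
    unfolding c1 c2 ..
  also have "\<dots> = c * ((if Suc m \<in> \<Gamma> then u else 0) - a * u)"
    unfolding exp_partial_Suc exp_partial_on_Suc u_def by (simp add: algebra_simps)
  finally have "\<mu> * stein_sol \<mu> \<Gamma> a (Suc k) - real k * stein_sol \<mu> \<Gamma> a k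
      = c * ((if Suc m \<in> \<Gamma> then u else 0) - a * u)" .
  then show ?thesis using cu unfolding Suc by (simp add: algebra_simps)
qed

lemma exp_sums_real: "(\<lambda>j. x^j / fact j) sums exp (x::real)"
  using exp_converges[of x] by (simp add: divide_inverse mult.commute)

lemma exp_tail_sums: "(\<lambda>j. \<mu>^(j + Suc m) / fact (j + Suc m)) sums (exp \<mu> - exp_partial \<mu> m)"
  using sums_split_initial_segment[OF exp_sums_real[of \<mu>], of "Suc m"]
  by (simp add: exp_partial_def lessThan_Suc_atMost)

lemma exp_tail_nonneg: "\<mu> \<ge> 0 \<Longrightarrow> exp \<mu> - exp_partial \<mu> m \<ge> 0"
  by (rule sums_le[OF _ sums_zero exp_tail_sums[where \<mu>=\<mu> and m=m]]) simp

lemma exp_partial_nonneg: "\<mu> \<ge> 0 \<Longrightarrow> exp_partial \<mu> m \<ge> 0"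
  unfolding exp_partial_def by (intro sum_nonneg) auto

lemma exp_partial_on_nonneg: "\<mu> \<ge> 0 \<Longrightarrow> exp_partial_on \<mu> \<Gamma> m \<ge> 0"
  unfolding exp_partial_on_def by (intro sum_nonneg) auto

text \<open>Comparison of consecutive partial sums and of consecutive tails: termwise,
  \<open>\<mu> \<cdot> \<mu>^j/j! = (j+1) \<cdot> \<mu>^(j+1)/(j+1)!\<close>, so multiplying by \<open>\<mu>\<close> shifts the series by one.\<close>

lemma exp_partial_shift:
  assumes "\<mu> > 0"
  shows "\<mu> * exp_partial \<mu> m \<le> real (Suc m) * exp_partial \<mu> (Suc m)"
proof (induction m)
  case 0 then show ?case by (simp add: exp_partial_def)
next
  case (Suc m)
  define u where "u = \<mu>^Suc (Suc m) / fact (Suc (Suc m))"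
  have shift: "\<mu> * (\<mu>^Suc m / fact (Suc m)) = real (Suc (Suc m)) * u"
  proof -
    have "real (Suc (Suc m)) * u = \<mu>^Suc (Suc m) / fact (Suc m)"
      unfolding u_def fact_Suc[of "Suc m"] by (simp del: of_nat_Suc fact_Suc)
    then show ?thesis by simp
  qed
  have "\<mu> * exp_partial \<mu> (Suc m) = \<mu> * exp_partial \<mu> m + real (Suc (Suc m)) * u"
    unfolding exp_partial_Suc shift[symmetric] by (simp add: algebra_simps)
  also have "\<dots> \<le> real (Suc m) * exp_partial \<mu> (Suc m) + real (Suc (Suc m)) * u"
    using Suc by simp
  also have "\<dots> \<le> real (Suc (Suc m)) * exp_partial \<mu> (Suc (Suc m))"
    using exp_partial_nonneg[of \<mu> "Suc m"] assms
    unfolding exp_partial_Suc[of \<mu> "Suc m"] u_def[symmetric] by (simp add: algebra_simps)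
  finally show ?case .
qed

lemma exp_tail_shift:
  assumes "\<mu> > 0"
  shows "real (Suc m) * (exp \<mu> - exp_partial \<mu> (Suc m)) \<le> \<mu> * (exp \<mu> - exp_partial \<mu> m)"
proof (rule sums_le[OF _ sums_mult[OF exp_tail_sums[where \<mu>=\<mu> and m="Suc m"], of "real (Suc m)"]
                         sums_mult[OF exp_tail_sums[where \<mu>=\<mu> and m=m], of \<mu>]])
  fix j
  have "real (Suc m) / real (j + Suc (Suc m)) \<le> 1" by simp
  then have "real (Suc m) / real (j + Suc (Suc m)) * (\<mu> * (\<mu>^(j + Suc m) / fact (j + Suc m)))
      \<le> \<mu> * (\<mu>^(j + Suc m) / fact (j + Suc m))"
    using assms by (intro mult_left_le_one_le) auto
  then show "real (Suc m) * (\<mu>^(j + Suc (Suc m)) / fact (j + Suc (Suc m)))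
      \<le> \<mu> * (\<mu>^(j + Suc m) / fact (j + Suc m))"
    by (simp add: field_simps)
qed

text \<open>The algebraic core of the bound on the increments of the Stein solution.
  With \<open>g(m+1) = c (F - a Q)\<close> and \<open>g(m+2) = (c r/\<mu>) (F + t - a (Q + u))\<close> and writing
  \<open>e^\<mu> = Q + u + T\<close> and \<open>e^\<mu> a = F + t + R\<close>, the quantity \<open>e^\<mu> (g(m+2) - g(m+1))\<close> is a combination
  of \<open>F, t, R \<ge> 0\<close> whose coefficients are \<open>\<le> 0\<close>, \<open>\<le> e^\<mu>/\<mu>\<close> and \<open>\<le> 0\<close> respectively, by the
  shift inequalities for partial sums and tails.\<close>

lemma stein_increment_identity:
  fixes c c' u F t R Q T a :: real
  assumes mass: "(Q + u + T) * a = F + t + R"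
  shows "(Q + u + T) * (c' * (F + t - a * (Q + u)) - c * (F - a * Q))
      = F * (c' * T - c * (T + u)) + t * (c' * T + c * Q) + R * (c * Q - c' * (Q + u))"
proof -
  have "(Q + u + T) * (c' * (F + t - a * (Q + u)) - c * (F - a * Q))
     = (Q + u + T) * c' * (F + t) - ((Q + u + T) * a) * c' * (Q + u)
       - (Q + u + T) * c * F + ((Q + u + T) * a) * c * Q"
    by (simp add: algebra_simps)
  also have "\<dots> = F * (c' * T - c * (T + u)) + t * (c' * T + c * Q) + R * (c * Q - c' * (Q + u))"
    unfolding mass by (simp add: algebra_simps)
  finally show ?thesis .
qed

lemma stein_increment_algebra:
  fixes \<mu> c r u F t R Q T a :: real
  assumes mu: "\<mu> > 0" and c: "c \<ge> 0" and r: "r > 0" and cu: "c * u = 1 / r"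
    and F: "F \<ge> 0" and R: "R \<ge> 0" and t: "0 \<le> t" "t \<le> u" and Q: "Q \<ge> 0" and T: "T \<ge> 0"
    and tail_shift: "r * T \<le> \<mu> * (T + u)" and partial_shift: "\<mu> * Q \<le> r * (Q + u)"
    and mass: "(Q + u + T) * a = F + t + R"
  shows "c * r / \<mu> * (F + t - a * (Q + u)) - c * (F - a * Q) \<le> 1 / \<mu>"
proof -
  define c' where "c' = c * r / \<mu>"
  define E where "E = Q + u + T"
  have c'u: "c' * u = 1 / \<mu>" using cu mu r unfolding c'_def by (simp add: field_simps)
  have "c * u > 0" using cu r by simp
  then have "u > 0" using c by (simp add: zero_less_mult_iff)
  then have E_pos: "E > 0" using Q T unfolding E_def by simp
  have identity: "E * (c' * (F + t - a * (Q + u)) - c * (F - a * Q))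
      = F * (c' * T - c * (T + u)) + t * (c' * T + c * Q) + R * (c * Q - c' * (Q + u))"
    unfolding E_def by (rule stein_increment_identity[OF mass])
  have coeff_F: "c' * T - c * (T + u) \<le> 0"
  proof -
    have "c' * T = c * (r * T) / \<mu>" unfolding c'_def by simp
    also have "\<dots> \<le> c * (\<mu> * (T + u)) / \<mu>"
      using tail_shift c mu by (intro divide_right_mono mult_left_mono) auto
    finally show ?thesis using mu by simp
  qed
  have coeff_R: "c * Q - c' * (Q + u) \<le> 0"
  proof -
    have "c * Q = c * (\<mu> * Q) / \<mu>" using mu by simp
    also have "\<dots> \<le> c * (r * (Q + u)) / \<mu>"
      using partial_shift c mu by (intro divide_right_mono mult_left_mono) auto
    finally show ?thesis unfolding c'_def by simp
  qed
  have coeff_t: "t * (c' * T + c * Q) \<le> E / \<mu>"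
  proof -
    have "c' \<ge> 0" using c r mu unfolding c'_def by simp
    then have "t * (c' * T + c * Q) \<le> u * (c' * T + c * Q)"
      using t c T Q by (intro mult_right_mono) auto
    also have "\<dots> = T / \<mu> + Q / r"
      using c'u cu by (simp add: algebra_simps)
    also have "Q / r \<le> (Q + u) / \<mu>"
      using partial_shift mu r by (simp add: field_simps mult.commute)
    finally show ?thesis unfolding E_def by (simp add: add_divide_distrib)
  qed
  have "E * (c' * (F + t - a * (Q + u)) - c * (F - a * Q)) \<le> E * (1 / \<mu>)"
    unfolding identity using mult_nonneg_nonpos[OF F coeff_F] mult_nonneg_nonpos[OF R coeff_R] coeff_t
    by simp
  then show ?thesis using E_pos unfolding c'_def by (rule mult_left_le_imp_le)
qed

lemma stein_increment_upper:
  assumes mu: "\<mu> > 0" and mass: "exp_partial_on \<mu> \<Gamma> (Suc m) \<le> exp \<mu> * a"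
  shows "stein_sol \<mu> \<Gamma> a (Suc (Suc m)) - stein_sol \<mu> \<Gamma> a (Suc m) \<le> 1 / \<mu>"
proof -
  define c where "c = fact m / \<mu>^Suc m"
  define u where "u = \<mu>^Suc m / fact (Suc m)"
  define t where "t = (if Suc m \<in> \<Gamma> then u else 0)"
  define F where "F = exp_partial_on \<mu> \<Gamma> m"
  define Q where "Q = exp_partial \<mu> m"
  define T where "T = exp \<mu> - exp_partial \<mu> (Suc m)"
  have QS: "exp_partial \<mu> (Suc m) = Q + u" unfolding Q_def u_def by (rule exp_partial_Suc)
  have FS: "exp_partial_on \<mu> \<Gamma> (Suc m) = F + t"
    unfolding F_def t_def u_def by (simp add: exp_partial_on_Suc)
  have "c * real (Suc m) / \<mu> = fact (Suc m) / \<mu>^Suc (Suc m)"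
    unfolding c_def by (simp add: field_simps)
  then have g2: "stein_sol \<mu> \<Gamma> a (Suc (Suc m)) = c * real (Suc m) / \<mu> * (F + t - a * (Q + u))"
    by (simp add: stein_sol_def FS QS)
  have g1: "stein_sol \<mu> \<Gamma> a (Suc m) = c * (F - a * Q)"
    by (simp add: stein_sol_def c_def F_def Q_def)
  show ?thesis unfolding g1 g2
  proof (rule stein_increment_algebra[where T = T and R = "exp \<mu> * a - F - t"])
    show "c * u = 1 / real (Suc m)" unfolding c_def u_def fact_Suc[of m] using mu by (simp del: of_nat_Suc)
    show "real (Suc m) * T \<le> \<mu> * (T + u)"
      using exp_tail_shift[OF mu, of m] QS unfolding T_def Q_def by (simp add: algebra_simps)
    show "\<mu> * Q \<le> real (Suc m) * (Q + u)"
      using exp_partial_shift[OF mu, of m] QS unfolding Q_def by simp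
    show "(Q + u + T) * a = F + t + (exp \<mu> * a - F - t)" unfolding T_def QS by simp
  qed (use mu mass FS exp_tail_nonneg[of \<mu> "Suc m"] in \<open>auto simp: c_def u_def t_def F_def Q_def T_def
         exp_partial_nonneg exp_partial_on_nonneg exp_tail_nonneg\<close>)
qed

lemma exp_partial_on_Compl: "exp_partial_on \<mu> (-\<Gamma>) k = exp_partial \<mu> k - exp_partial_on \<mu> \<Gamma> k"
  unfolding exp_partial_on_def exp_partial_def sum_subtractf[symmetric] by (rule sum.cong) auto

lemma stein_sol_Compl: "stein_sol \<mu> (-\<Gamma>) (1 - a) k = - stein_sol \<mu> \<Gamma> a k"
  by (cases k) (simp_all add: stein_sol_def exp_partial_on_Compl algebra_simps)

text \<open>Two-sided increment bound, obtained by applying the one-sided bound to \<open>\<Gamma>\<close> and to its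
  complement (whose Stein solution is \<open>-g\<close>).\<close>

lemma stein_increment_bound:
  assumes mu: "\<mu> > 0" and mass: "exp_partial_on \<mu> \<Gamma> (Suc m) \<le> exp \<mu> * a"
    and mass_Compl: "exp_partial_on \<mu> (-\<Gamma>) (Suc m) \<le> exp \<mu> * (1 - a)"
  shows "\<bar>stein_sol \<mu> \<Gamma> a (Suc (Suc m)) - stein_sol \<mu> \<Gamma> a (Suc m)\<bar> \<le> 1 / \<mu>"
  using stein_increment_upper[OF mu mass] stein_increment_upper[OF mu mass_Compl]
  unfolding stein_sol_Compl by linarith

text \<open>Connection with the Poisson distribution: the partial weight \<open>exp_partial_on \<mu> \<Gamma> k\<close> is at
  most \<open>e^\<mu> P_\<mu>(\<Gamma>)\<close>, so the choice \<open>a = P_\<mu>(\<Gamma>)\<close> makes both mass conditions hold.\<close>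

lemma exp_partial_on_le_poisson:
  assumes mu: "\<mu> > 0"
  shows "exp_partial_on \<mu> \<Gamma> k \<le> exp \<mu> * poisson_prob \<mu> \<Gamma>"
proof -
  have "exp_partial_on \<mu> \<Gamma> k = exp \<mu> * (\<Sum>j\<in>{..k} \<inter> \<Gamma>. pmf (poisson_pmf \<mu>) j)"
    unfolding exp_partial_on_def pmf_poisson[OF mu] sum_distrib_left
    by (subst sum.inter_restrict) (auto simp: exp_minus field_simps intro!: sum.cong)
  also have "(\<Sum>j\<in>{..k} \<inter> \<Gamma>. pmf (poisson_pmf \<mu>) j) = measure_pmf.prob (poisson_pmf \<mu>) ({..k} \<inter> \<Gamma>)"
    by (simp add: measure_measure_pmf_finite)
  also have "\<dots> \<le> poisson_prob \<mu> \<Gamma>"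
    unfolding poisson_prob_def by (rule measure_pmf.finite_measure_mono) auto
  finally show ?thesis by (simp add: mult_left_mono)
qed

lemma poisson_prob_Compl: "poisson_prob \<mu> (-\<Gamma>) = 1 - poisson_prob \<mu> \<Gamma>"
  unfolding poisson_prob_def
  using measure_pmf.prob_compl[of \<Gamma> "poisson_pmf \<mu>"] by (simp add: Compl_eq_Diff_UNIV)

lemma poisson_stein_increment:
  assumes mu: "\<mu> > 0"
  shows "\<bar>stein_sol \<mu> \<Gamma> (poisson_prob \<mu> \<Gamma>) (Suc (Suc m))
           - stein_sol \<mu> \<Gamma> (poisson_prob \<mu> \<Gamma>) (Suc m)\<bar> \<le> 1 / \<mu>"
  using exp_partial_on_le_poisson[OF mu, of "-\<Gamma>" "Suc m"]
  by (intro stein_increment_bound[OF mu exp_partial_on_le_poisson[OF mu]])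
     (simp add: poisson_prob_Compl)

lemma increment_telescope:
  fixes g :: "nat \<Rightarrow> real"
  assumes step: "\<And>m. \<bar>g (Suc (Suc m)) - g (Suc m)\<bar> \<le> D"
  shows "\<bar>g (Suc x + k) - g (Suc x)\<bar> \<le> D * k"
proof (induction k)
  case (Suc k)
  have "\<bar>g (Suc x + Suc k) - g (Suc x)\<bar>
      \<le> \<bar>g (Suc (Suc (x + k))) - g (Suc (x + k))\<bar> + \<bar>g (Suc x + k) - g (Suc x)\<bar>"
    by simp
  also have "\<dots> \<le> D + D * k" using step[of "x + k"] Suc by simp
  finally show ?case by (simp add: algebra_simps)
qed simp

text \<open>Sensitivity of the Poisson law to its parameter: by the mean value theorem each weight
  \<open>r^k e^(-r)/k!\<close> moves by at most \<open>|r - s|\<close> times \<open>(k M^(k-1) + M^k)/k!\<close> for \<open>r, s \<le> M\<close>,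
  and these bounds sum to \<open>2 e^M\<close>.\<close>

definition poisson_weight :: "real \<Rightarrow> nat \<Rightarrow> real" where
  "poisson_weight r k = r^k / fact k * exp (-r)"

definition poisson_weight_slope :: "real \<Rightarrow> nat \<Rightarrow> real" where
  "poisson_weight_slope M k = (real k * M^(k-1) + M^k) / fact k"

lemma poisson_weight_deriv:
  "((\<lambda>r. poisson_weight r k) has_real_derivative
     ((real k * r^(k-1) - r^k) / fact k * exp (-r))) (at r)"
  unfolding poisson_weight_def
  by (rule derivative_eq_intros refl | simp)+ (simp add: field_simps)

lemma poisson_weight_lipschitz_ordered:
  assumes "0 \<le> x" "x < y" "y \<le> M"
  shows "\<bar>poisson_weight y k - poisson_weight x k\<bar> \<le> (y - x) * poisson_weight_slope M k"
proof -
  obtain z where z: "x < z" "z < y"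
    and mvt: "poisson_weight y k - poisson_weight x k
               = (y - x) * ((real k * z^(k-1) - z^k) / fact k * exp (-z))"
    using MVT2[OF assms(2), of "\<lambda>r. poisson_weight r k"
        "\<lambda>r. (real k * r^(k-1) - r^k) / fact k * exp (-r)"] poisson_weight_deriv by blast
  have z_range: "0 \<le> z" "z \<le> M" using z assms by auto
  have "\<bar>real k * z^(k-1) - z^k\<bar> \<le> real k * z^(k-1) + z^k"
    using z_range by (intro abs_diff_le_iff[THEN iffD2]) auto
  then have "\<bar>(real k * z^(k-1) - z^k) / fact k * exp (-z)\<bar>
      \<le> (real k * z^(k-1) + z^k) / fact k * exp (-z)"
    by (auto simp: abs_mult intro!: mult_right_mono divide_right_mono)
  also have "\<dots> \<le> (real k * z^(k-1) + z^k) / fact k"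
    using z_range by (intro mult_left_le) auto
  also have "\<dots> \<le> poisson_weight_slope M k"
    unfolding poisson_weight_slope_def using z_range
    by (simp add: divide_right_mono add_mono mult_left_mono power_mono)
  finally have slope: "\<bar>(real k * z^(k-1) - z^k) / fact k * exp (-z)\<bar> \<le> poisson_weight_slope M k" .
  have "\<bar>y - x\<bar> = y - x" using z by simp
  then show ?thesis
    unfolding mvt abs_mult[of "y - x"] using mult_left_mono[OF slope, of "y - x"] z by simp
qed

lemma poisson_weight_lipschitz:
  assumes "0 \<le> x" "0 \<le> y" "x \<le> M" "y \<le> M"
  shows "\<bar>poisson_weight y k - poisson_weight x k\<bar> \<le> \<bar>y - x\<bar> * poisson_weight_slope M k"
  using assms poisson_weight_lipschitz_ordered[of x y M k] poisson_weight_lipschitz_ordered[of y x M k]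
  by (cases x y rule: linorder_cases) (simp_all add: abs_minus_commute)

lemma poisson_weight_slope_sums: "poisson_weight_slope M sums (2 * exp M)"
proof -
  have s1: "(\<lambda>k. M^k / fact k) sums exp M" by (rule exp_sums_real)
  have "(\<lambda>k. real (Suc k) * M^(Suc k - 1) / fact (Suc k)) sums exp M"
    using s1 by (simp del: of_nat_Suc add: field_simps)
  then have s2: "(\<lambda>k. real k * M^(k-1) / fact k) sums exp M"
    by (subst (asm) sums_Suc_iff) simp
  show ?thesis
    using sums_add[OF s2 s1] unfolding poisson_weight_slope_def by (simp add: add_divide_distrib)
qed

lemma poisson_prob_suminf:
  assumes "r > 0"
  shows "poisson_prob r \<Gamma> = (\<Sum>k. if k \<in> \<Gamma> then poisson_weight r k else 0)"
  unfolding poisson_prob_def measure_pmf_conv_infsetsum infsetsum_nat[OF pmf_abs_summable]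
    pmf_poisson[OF assms] poisson_weight_def
  by simp

lemma summable_poisson_weight_on:
  assumes "r > 0"
  shows "summable (\<lambda>k. if k \<in> \<Gamma> then poisson_weight r k else 0)"
proof (rule summable_comparison_test'[where N = 0])
  show "summable (\<lambda>k. r^k / fact k)" using exp_sums_real[of r] by (auto simp: sums_iff)
  show "norm (if k \<in> \<Gamma> then poisson_weight r k else 0) \<le> r^k / fact k" for k
    using assms by (auto simp: poisson_weight_def field_simps)
qed

lemma poisson_prob_parameter_diff:
  assumes mu: "\<mu> > 0" and lam: "lam > 0"
  shows "\<bar>poisson_prob \<mu> \<Gamma> - poisson_prob lam \<Gamma>\<bar> \<le> 2 * \<bar>lam - \<mu>\<bar> * exp (max lam \<mu>)"
proof -
  define M where "M = max lam \<mu>"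
  define h where "h k = (if k \<in> \<Gamma> then poisson_weight \<mu> k - poisson_weight lam k else 0)" for k
  have h_bound: "\<bar>h k\<bar> \<le> \<bar>lam - \<mu>\<bar> * poisson_weight_slope M k" for k
  proof -
    have "\<bar>poisson_weight \<mu> k - poisson_weight lam k\<bar> \<le> \<bar>\<mu> - lam\<bar> * poisson_weight_slope M k"
      using mu lam by (intro poisson_weight_lipschitz) (auto simp: M_def)
    moreover have "0 \<le> \<bar>lam - \<mu>\<bar> * poisson_weight_slope M k"
      using mu lam by (auto simp: poisson_weight_slope_def M_def)
    ultimately show ?thesis by (auto simp: h_def abs_minus_commute)
  qed
  have slope_sums: "(\<lambda>k. \<bar>lam - \<mu>\<bar> * poisson_weight_slope M k) sums (\<bar>lam - \<mu>\<bar> * (2 * exp M))"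
    by (rule sums_mult[OF poisson_weight_slope_sums])
  have abs_h_summable: "summable (\<lambda>k. \<bar>h k\<bar>)"
    by (rule summable_rabs_comparison_test[OF _ sums_summable[OF slope_sums]]) (use h_bound in auto)
  have "poisson_prob \<mu> \<Gamma> - poisson_prob lam \<Gamma> = (\<Sum>k. h k)"
    unfolding poisson_prob_suminf[OF mu] poisson_prob_suminf[OF lam] h_def
    by (subst suminf_diff[OF summable_poisson_weight_on[OF mu] summable_poisson_weight_on[OF lam]])
       (auto intro!: suminf_cong)
  then have "\<bar>poisson_prob \<mu> \<Gamma> - poisson_prob lam \<Gamma>\<bar> \<le> (\<Sum>k. \<bar>h k\<bar>)"
    using summable_rabs[OF abs_h_summable] by simp
  also have "\<dots> \<le> \<bar>lam - \<mu>\<bar> * (2 * exp M)"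
    using suminf_le[OF h_bound abs_h_summable sums_summable[OF slope_sums]] slope_sums
    by (simp add: sums_iff)
  finally show ?thesis by (simp add: M_def)
qed

text \<open>On a finite product of copies of \<open>\<nat>\<close> with the discrete \<open>\<sigma>\<close>-algebra every set is measurable
  (the space is countable and singletons are measurable boxes), hence every map is measurable.\<close>

lemma sets_PiM_count_space_nat:
  assumes J: "finite J" and A: "A \<subseteq> space (PiM J (\<lambda>_. count_space (UNIV::nat set)))"
  shows "A \<in> sets (PiM J (\<lambda>_. count_space (UNIV::nat set)))"
proof -
  have "countable A"
    using A by (rule countable_subset) (auto simp: space_PiM intro!: countable_PiE J)
  moreover have "{x} \<in> sets (PiM J (\<lambda>_. count_space (UNIV::nat set)))" if "x \<in> A" for x
  proof -
    have "{x} = PiE J (\<lambda>i. {x i})"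
      using that A by (force simp: space_PiM PiE_iff extensional_def fun_eq_iff)
    also have "\<dots> \<in> sets (PiM J (\<lambda>_. count_space (UNIV::nat set)))"
      by (rule sets_PiM_I_finite[OF J]) auto
    finally show ?thesis .
  qed
  ultimately have "(\<Union>x\<in>A. {x}) \<in> sets (PiM J (\<lambda>_. count_space (UNIV::nat set)))"
    by (intro sets.countable_UN') auto
  then show ?thesis by simp
qed

lemma measurable_PiM_count_space_nat:
  assumes "finite J" and "\<And>x. F x \<in> space N"
  shows "F \<in> measurable (PiM J (\<lambda>_. count_space (UNIV::nat set))) N"
  by (rule measurableI) (auto intro: sets_PiM_count_space_nat assms)

definition all_one :: "nat set \<Rightarrow> (nat \<Rightarrow> nat) \<Rightarrow> nat" where
  "all_one K x = of_bool (\<forall>i\<in>K. x i = 1)"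

lemma all_one_le_1: "all_one K x \<le> 1"
  by (simp add: all_one_def)

lemma all_one_cong: "(\<And>i. i \<in> K \<Longrightarrow> x i = y i) \<Longrightarrow> all_one K x = all_one K y"
  by (simp add: all_one_def)

lemma prod_01_eq_all_one:
  assumes "finite K" "\<forall>i\<in>K. x i \<in> {0, 1}"
  shows "(\<Prod>i\<in>K. x i) = all_one K x"
  using assms by (induction K rule: finite_induct) (auto simp: all_one_def)

lemma all_one_mult: "all_one A x * all_one B x = all_one (A \<union> B) x"
  by (auto simp: all_one_def)

locale bernoulli_row = prob_space M for M :: "'a measure" +
  fixes \<xi> :: "nat \<Rightarrow> 'a \<Rightarrow> nat" and p :: real
  assumes indep: "indep_vars (\<lambda>_. count_space UNIV) \<xi> {1..}"
    and bern: "\<forall>i\<ge>1. prob {\<omega> \<in> space M. \<xi> i \<omega> = 1} = p \<and> prob {\<omega> \<in> space M. \<xi> i \<omega> = 0} = 1 - p"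
begin

lemma measurable_coord: "i \<ge> 1 \<Longrightarrow> \<xi> i \<in> measurable M (count_space UNIV)"
  using indep unfolding indep_vars_def by auto

lemma measurable_finite_coords:
  assumes J: "finite J" "J \<subseteq> {1..}" and dep: "\<And>x y. (\<forall>i\<in>J. x i = y i) \<Longrightarrow> F x = F y"
    and F: "\<And>x. F x \<in> space N"
  shows "(\<lambda>\<omega>. F (\<lambda>i. \<xi> i \<omega>)) \<in> measurable M N"
proof -
  have "(\<lambda>\<omega>. restrict (\<lambda>i. \<xi> i \<omega>) J) \<in> measurable M (PiM J (\<lambda>_. count_space UNIV))"
    using J measurable_coord by (intro measurable_restrict) auto
  then have "(\<lambda>\<omega>. F (restrict (\<lambda>i. \<xi> i \<omega>) J)) \<in> measurable M N"
    by (rule measurable_compose[OF _ measurable_PiM_count_space_nat[OF J(1) F]])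
  moreover have "(\<lambda>\<omega>. F (restrict (\<lambda>i. \<xi> i \<omega>) J)) = (\<lambda>\<omega>. F (\<lambda>i. \<xi> i \<omega>))"
    by (intro ext dep) auto
  ultimately show ?thesis by simp
qed

lemma integrable_finite_coords:
  fixes F :: "(nat \<Rightarrow> nat) \<Rightarrow> real"
  assumes J: "finite J" "J \<subseteq> {1..}" and dep: "\<And>x y. (\<forall>i\<in>J. x i = y i) \<Longrightarrow> F x = F y"
    and bound: "\<And>x. \<bar>F x\<bar> \<le> C"
  shows "integrable M (\<lambda>\<omega>. F (\<lambda>i. \<xi> i \<omega>))"
  by (rule integrable_const_bound[where B = C])
     (use bound measurable_finite_coords[OF J dep, where N = borel] in auto)

lemma integral_mult_disjoint_coords:
  fixes F G :: "(nat \<Rightarrow> nat) \<Rightarrow> real"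
  assumes A: "finite A" "A \<subseteq> {1..}" and B: "finite B" "B \<subseteq> {1..}" and AB: "A \<inter> B = {}"
    and depF: "\<And>x y. (\<forall>i\<in>A. x i = y i) \<Longrightarrow> F x = F y"
    and depG: "\<And>x y. (\<forall>i\<in>B. x i = y i) \<Longrightarrow> G x = G y"
    and boundF: "\<And>x. \<bar>F x\<bar> \<le> C1" and boundG: "\<And>x. \<bar>G x\<bar> \<le> C2"
  shows "(\<integral>\<omega>. F (\<lambda>i. \<xi> i \<omega>) * G (\<lambda>i. \<xi> i \<omega>) \<partial>M)
       = (\<integral>\<omega>. F (\<lambda>i. \<xi> i \<omega>) \<partial>M) * (\<integral>\<omega>. G (\<lambda>i. \<xi> i \<omega>) \<partial>M)"
proof -
  let ?rA = "\<lambda>\<omega>. restrict (\<lambda>i. \<xi> i \<omega>) A" and ?rB = "\<lambda>\<omega>. restrict (\<lambda>i. \<xi> i \<omega>) B"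
  have "indep_var (PiM A (\<lambda>_. count_space UNIV)) ?rA (PiM B (\<lambda>_. count_space UNIV)) ?rB"
    using AB A B by (intro indep_var_restrict[OF indep]) auto
  then have "indep_var borel (F \<circ> ?rA) borel (G \<circ> ?rB)"
    by (rule indep_var_compose[OF _ measurable_PiM_count_space_nat[OF A(1)]
                                    measurable_PiM_count_space_nat[OF B(1)]]) auto
  moreover have "F \<circ> ?rA = (\<lambda>\<omega>. F (\<lambda>i. \<xi> i \<omega>))" "G \<circ> ?rB = (\<lambda>\<omega>. G (\<lambda>i. \<xi> i \<omega>))"
    by (auto intro!: ext depF depG)
  ultimately show ?thesis
    by (intro indep_var_lebesgue_integral)
       (auto intro: integrable_finite_coords[OF A depF boundF] integrable_finite_coords[OF B depG boundG])
qed

lemma expectation_all_one: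
  assumes K: "finite K" "K \<subseteq> {1..}"
  shows "(\<integral>\<omega>. real (all_one K (\<lambda>i. \<xi> i \<omega>)) \<partial>M) = p ^ card K"
proof (cases "K = {}")
  case True then show ?thesis by (simp add: all_one_def prob_space)
next
  case False
  define E where "E = (\<Inter>i\<in>K. \<xi> i -` {1} \<inter> space M)"
  have E_sets: "\<xi> i -` {1} \<inter> space M \<in> sets M" if "i \<in> K" for i
    using measurable_coord[of i] that K by (auto intro: measurable_sets)
  have "E \<in> sets M" unfolding E_def using E_sets False K by (intro sets.finite_INT) auto
  then have "(\<integral>\<omega>. real (all_one K (\<lambda>i. \<xi> i \<omega>)) \<partial>M) = prob E"
    by (subst Bochner_Integration.integral_cong[OF refl, where g = "indicator E"])
       (auto simp: all_one_def E_def indicator_def)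
  also have "\<dots> = (\<Prod>i\<in>K. prob (\<xi> i -` {1} \<inter> space M))"
    unfolding E_def by (rule indep_varsD[OF indep False K(1) K(2)]) simp
  also have "\<dots> = (\<Prod>i\<in>K. p)"
  proof (rule prod.cong[OF refl])
    fix i assume "i \<in> K"
    then have "i \<ge> 1" using K by auto
    moreover have "\<xi> i -` {1} \<inter> space M = {\<omega> \<in> space M. \<xi> i \<omega> = 1}" by auto
    ultimately show "prob (\<xi> i -` {1} \<inter> space M) = p" using bern by simp
  qed
  finally show ?thesis by simp
qed

lemma coord_01_AE:
  assumes "i \<ge> 1" shows "AE \<omega> in M. \<xi> i \<omega> \<in> {0, 1}"
proof -
  have sets: "{\<omega> \<in> space M. \<xi> i \<omega> = 1} \<in> sets M" "{\<omega> \<in> space M. \<xi> i \<omega> = 0} \<in> sets M"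
    using measurable_coord[OF assms] by (auto intro!: measurable_sets_Collect)
  have "prob ({\<omega> \<in> space M. \<xi> i \<omega> = 1} \<union> {\<omega> \<in> space M. \<xi> i \<omega> = 0})
      = prob {\<omega> \<in> space M. \<xi> i \<omega> = 1} + prob {\<omega> \<in> space M. \<xi> i \<omega> = 0}"
    using sets by (intro finite_measure_Union) auto
  also have "\<dots> = 1" using bern assms by simp
  finally have "AE \<omega> in M. \<omega> \<in> {\<omega> \<in> space M. \<xi> i \<omega> = 1} \<union> {\<omega> \<in> space M. \<xi> i \<omega> = 0}"
    by (rule AE_prob_1)
  then show ?thesis by eventually_elim auto
qed

end

text \<open>Since each \<open>q\<^sub>j\<close> is injective, an index set meets at most \<open>\<ell>\<^sup>2\<close> others (its neighbourhood).\<close>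

locale scan_statistic = bernoulli_row +
  fixes ell :: nat and q :: "nat \<Rightarrow> nat \<Rightarrow> nat" and n :: nat
  assumes ell: "ell \<ge> 1"
    and q_incr: "\<forall>j\<in>{1..ell}. strict_mono_on {1..} (q j)"
    and q_first: "\<forall>l\<ge>1. l \<le> q 1 l"
    and q_chain: "\<forall>l\<ge>1. \<forall>j\<in>{1..<ell}. q j l < q (Suc j) l"
    and p_pos: "0 < p" and p_lt1: "p < 1"
    and n_pos: "n \<ge> 1"
begin

definition idx :: "nat \<Rightarrow> nat set" where
  "idx l = (\<lambda>j. q j l) ` {1..ell}"

definition nbhd :: "nat \<Rightarrow> nat set" where
  "nbhd l = {k\<in>{1..n}. idx k \<inter> idx l \<noteq> {}}"

lemma q_strict_chain:
  assumes "l \<ge> 1" "1 \<le> j" "j < j'" "j' \<le> ell"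
  shows "q j l < q j' l"
  using assms(3-)
proof (induction j' rule: less_induct)
  case (less j')
  then obtain j0 where j0: "j' = Suc j0" by (cases j') auto
  have "q j0 l < q j' l" using q_chain assms less.prems j0 by auto
  moreover have "q j l \<le> q j0 l"
  proof (cases "j = j0")
    case False
    then have "q j l < q j0 l" using less.prems j0 by (intro less.IH) auto
    then show ?thesis by simp
  qed simp
  ultimately show ?case by simp
qed

lemma q_first_le: "l \<ge> 1 \<Longrightarrow> j \<in> {1..ell} \<Longrightarrow> q 1 l \<le> q j l"
  using q_strict_chain[of l 1 j] by (cases "j = 1") auto

lemma idx_finite: "finite (idx l)"
  unfolding idx_def by simp

lemma idx_ge: "l \<ge> 1 \<Longrightarrow> j \<in> {1..ell} \<Longrightarrow> l \<le> q j l"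
  using q_first q_first_le by (meson order.trans)

lemma idx_subset: "l \<ge> 1 \<Longrightarrow> idx l \<subseteq> {1..}"
  unfolding idx_def using idx_ge by force

lemma inj_on_q_index: "l \<ge> 1 \<Longrightarrow> inj_on (\<lambda>j. q j l) {1..ell}"
  unfolding inj_on_def by (metis atLeastAtMost_iff linorder_neqE_nat order_less_irrefl q_strict_chain)

lemma card_idx: "l \<ge> 1 \<Longrightarrow> card (idx l) = ell"
  unfolding idx_def using card_image[OF inj_on_q_index] by simp

lemma q_inj: "j \<in> {1..ell} \<Longrightarrow> inj_on (q j) {1..}"
  using q_incr strict_mono_on_imp_inj_on by blast

text \<open>Distinct summands have distinct index sets: the smallest element \<open>q\<^sub>1(l)\<close> determines \<open>l\<close>.\<close>

lemma idx_inj: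
  assumes "k \<ge> 1" "l \<ge> 1" "idx k = idx l" shows "k = l"
proof -
  have min_idx: "q 1 m = Min (idx m)" if "m \<ge> 1" for m
    using that ell q_first_le unfolding idx_def by (intro Min_eqI[symmetric]) auto
  have "q 1 k = q 1 l" using assms min_idx by simp
  then show ?thesis using q_inj[of 1] ell assms by (auto dest: inj_onD)
qed

lemma card_nbhd: "l \<ge> 1 \<Longrightarrow> card (nbhd l) \<le> ell^2"
proof -
  define C where "C jj = {k\<in>{1..n}. q (fst jj) k = q (snd jj) l}" for jj
  have "nbhd l \<subseteq> (\<Union>jj\<in>{1..ell}\<times>{1..ell}. C jj)"
    unfolding nbhd_def C_def idx_def by force
  then have "card (nbhd l) \<le> card (\<Union>jj\<in>{1..ell}\<times>{1..ell}. C jj)"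
    by (intro card_mono) (auto simp: C_def)
  also have "\<dots> \<le> (\<Sum>jj\<in>{1..ell}\<times>{1..ell}. card (C jj))" by (rule card_UN_le) simp
  also have "\<dots> \<le> (\<Sum>jj\<in>{1..ell}\<times>{1..ell}. 1)"
  proof (rule sum_mono)
    fix jj assume "jj \<in> {1..ell}\<times>{1..ell}"
    then have "inj_on (q (fst jj)) {1..}" by (intro q_inj) auto
    then have "\<forall>x\<in>C jj. \<forall>y\<in>C jj. x = y"
      unfolding C_def by (auto intro: inj_onD[where f = "q (fst jj)" and A = "{1..}"])
    then show "card (C jj) \<le> 1" using card_le_Suc0_iff_eq[of "C jj"] by (simp add: C_def)
  qed
  finally show ?thesis by (simp add: power2_eq_square)
qed

lemma nbhd_finite: "finite (nbhd l)"
  unfolding nbhd_def by simp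

lemma self_in_nbhd: "l \<in> {1..n} \<Longrightarrow> l \<in> nbhd l"
  unfolding nbhd_def idx_def using ell by auto

lemma nbhd_subset: "nbhd l \<subseteq> {1..n}"
  unfolding nbhd_def by auto

lemma card_idx_Un:
  assumes k: "k \<in> {1..n}" and l: "l \<in> {1..n}" and kl: "k \<noteq> l"
  shows "card (idx l \<union> idx k) \<ge> ell + 1"
proof -
  have "\<not> idx k \<subseteq> idx l"
  proof
    assume "idx k \<subseteq> idx l"
    then have "idx k = idx l" using card_idx k l by (intro card_subset_eq idx_finite) auto
    then show False using idx_inj k l kl by auto
  qed
  then have "card (idx l) < card (idx l \<union> idx k)"
    by (intro psubset_card_mono) (auto simp: idx_finite)
  then show ?thesis using card_idx l by simp
qed

text \<open>The summands \<open>X\<^sub>l\<close>, their sum \<open>W\<close> (which equals \<open>S\<^sub>n\<close> almost surely), and the part \<open>Z\<^sub>l\<close> of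
  \<open>W\<close> coming from summands outside the neighbourhood of \<open>l\<close>, which is independent of \<open>X\<^sub>l\<close>.\<close>

definition X :: "nat \<Rightarrow> (nat \<Rightarrow> nat) \<Rightarrow> nat" where
  "X l x = all_one (idx l) x"

definition W :: "(nat \<Rightarrow> nat) \<Rightarrow> nat" where
  "W x = (\<Sum>l\<in>{1..n}. X l x)"

definition Z :: "nat \<Rightarrow> (nat \<Rightarrow> nat) \<Rightarrow> nat" where
  "Z l x = (\<Sum>k\<in>{1..n} - nbhd l. X k x)"

definition support :: "nat set" where
  "support = (\<Union>l\<in>{1..n}. idx l)"

definition far_idx :: "nat \<Rightarrow> nat set" where
  "far_idx l = (\<Union>k\<in>{1..n} - nbhd l. idx k)"

abbreviation row :: "'a \<Rightarrow> nat \<Rightarrow> nat" where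
  "row \<omega> \<equiv> (\<lambda>i. \<xi> i \<omega>)"

lemma support_finite: "finite support"
  unfolding support_def by (simp add: idx_finite)

lemma support_subset: "support \<subseteq> {1..}"
  unfolding support_def using idx_subset by force

lemma far_idx_finite: "finite (far_idx l)"
  unfolding far_idx_def by (simp add: idx_finite)

lemma far_idx_subset: "far_idx l \<subseteq> {1..}"
  unfolding far_idx_def using idx_subset by force

lemma idx_far_idx_disjoint: "idx l \<inter> far_idx l = {}"
  unfolding far_idx_def nbhd_def by auto

lemma X_cong: "k \<in> {1..n} \<Longrightarrow> \<forall>i\<in>support. x i = y i \<Longrightarrow> X k x = X k y"
  unfolding X_def support_def by (intro all_one_cong) auto

lemma W_cong: "\<forall>i\<in>support. x i = y i \<Longrightarrow> W x = W y"
  unfolding W_def by (intro sum.cong refl X_cong) auto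

lemma Z_cong_far: "\<forall>i\<in>far_idx l. x i = y i \<Longrightarrow> Z l x = Z l y"
  unfolding Z_def X_def far_idx_def by (intro sum.cong refl all_one_cong) auto

lemma Z_cong: "\<forall>i\<in>support. x i = y i \<Longrightarrow> Z l x = Z l y"
  unfolding Z_def by (intro sum.cong refl X_cong) auto

lemma X_le_1: "X l x \<le> 1"
  unfolding X_def by (rule all_one_le_1)

lemma sum_X_le: "A \<subseteq> {1..n} \<Longrightarrow> (\<Sum>k\<in>A. X k x) \<le> n"
proof -
  assume A: "A \<subseteq> {1..n}"
  have "(\<Sum>k\<in>A. X k x) \<le> card A" using sum_mono[of A "\<lambda>k. X k x" "\<lambda>_. 1"] X_le_1 by simp
  also have "\<dots> \<le> n" using A card_mono[OF _ A] by simp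
  finally show ?thesis .
qed

lemma W_le: "W x \<le> n"
  unfolding W_def by (rule sum_X_le) auto

lemma Z_le: "Z l x \<le> n"
  unfolding Z_def by (rule sum_X_le) auto

lemma W_split: "l \<in> {1..n} \<Longrightarrow> W x = (\<Sum>k\<in>nbhd l. X k x) + Z l x"
proof -
  have "{1..n} = nbhd l \<union> ({1..n} - nbhd l)" using nbhd_subset by auto
  then show ?thesis
    unfolding W_def Z_def by (metis finite_Un finite_atLeastAtMost sum.union_disjoint Diff_disjoint)
qed

lemma measurable_W: "(\<lambda>\<omega>. W (row \<omega>)) \<in> measurable M (count_space UNIV)"
  by (rule measurable_finite_coords[OF support_finite support_subset]) (auto intro: W_cong)

lemma integrable_support:
  fixes F :: "(nat \<Rightarrow> nat) \<Rightarrow> real"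
  assumes "\<And>x y. \<forall>i\<in>support. x i = y i \<Longrightarrow> F x = F y" and "\<And>x. \<bar>F x\<bar> \<le> C"
  shows "integrable M (\<lambda>\<omega>. F (row \<omega>))"
  by (rule integrable_finite_coords[OF support_finite support_subset assms])

lemma integrable_X: "k \<in> {1..n} \<Longrightarrow> integrable M (\<lambda>\<omega>. real (X k (row \<omega>)))"
  by (rule integrable_support[where C = 1]) (use X_cong X_le_1 in auto)

lemma integrable_X_pair:
  assumes "k \<in> {1..n}" "l \<in> {1..n}"
  shows "integrable M (\<lambda>\<omega>. real (X l (row \<omega>)) * real (X k (row \<omega>)))"
proof (rule integrable_support[where C = 1])
  show "real (X l x) * real (X k x) = real (X l y) * real (X k y)" if "\<forall>i\<in>support. x i = y i" for x y
    using X_cong[OF _ that] assms by simp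
  show "\<bar>real (X l x) * real (X k x)\<bar> \<le> 1" for x
    using X_le_1[of l x] X_le_1[of k x] by (simp add: mult_le_one)
qed

text \<open>First and second moments: \<open>E X\<^sub>k = p^\<ell>\<close>, and for \<open>k \<noteq> l\<close> the union of the two index sets
  has at least \<open>\<ell> + 1\<close> elements, so \<open>E (X\<^sub>l X\<^sub>k) \<le> p^(\<ell>+1)\<close>.\<close>

lemma expectation_X: "k \<in> {1..n} \<Longrightarrow> (\<integral>\<omega>. real (X k (row \<omega>)) \<partial>M) = p ^ ell"
  unfolding X_def using expectation_all_one[OF idx_finite idx_subset, of k] card_idx[of k] by simp

lemma expectation_X_pair:
  assumes k: "k \<in> {1..n}" and l: "l \<in> {1..n}" and kl: "k \<noteq> l"
  shows "(\<integral>\<omega>. real (X l (row \<omega>)) * real (X k (row \<omega>)) \<partial>M) \<le> p ^ (ell + 1)"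
proof -
  have "(\<integral>\<omega>. real (X l (row \<omega>)) * real (X k (row \<omega>)) \<partial>M)
      = (\<integral>\<omega>. real (all_one (idx l \<union> idx k) (row \<omega>)) \<partial>M)"
    unfolding X_def of_nat_mult[symmetric] all_one_mult ..
  also have "\<dots> = p ^ card (idx l \<union> idx k)"
    using idx_subset k l by (intro expectation_all_one) (auto simp: idx_finite)
  also have "\<dots> \<le> p ^ (ell + 1)"
    using card_idx_Un[OF k l kl] p_pos p_lt1 by (intro power_decreasing) auto
  finally show ?thesis .
qed

text \<open>Every real function of \<open>(W, Z\<^sub>l, X\<^sub>l)\<close> is integrable, since these take values in \<open>{..n}\<close>.\<close>

lemma integrable_W_Z_X:
  fixes F :: "nat \<Rightarrow> nat \<Rightarrow> nat \<Rightarrow> real"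
  assumes l: "l \<in> {1..n}"
  shows "integrable M (\<lambda>\<omega>. F (W (row \<omega>)) (Z l (row \<omega>)) (X l (row \<omega>)))"
proof (rule integrable_support[where C = "\<Sum>abc\<in>{..n} \<times> {..n} \<times> {..n}. \<bar>F (fst abc) (fst (snd abc)) (snd (snd abc))\<bar>"])
  show "F (W x) (Z l x) (X l x) = F (W y) (Z l y) (X l y)" if "\<forall>i\<in>support. x i = y i" for x y
    using W_cong[OF that] Z_cong[OF that] X_cong[OF l that] by simp
  show "\<bar>F (W x) (Z l x) (X l x)\<bar>
      \<le> (\<Sum>abc\<in>{..n} \<times> {..n} \<times> {..n}. \<bar>F (fst abc) (fst (snd abc)) (snd (snd abc))\<bar>)" for x
  proof -
    have "X l x \<le> n" using X_le_1[of l x] n_pos by linarith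
    then have "(W x, Z l x, X l x) \<in> {..n} \<times> {..n} \<times> {..n}" using W_le Z_le by simp
    then show ?thesis
      using member_le_sum[where f = "\<lambda>abc. \<bar>F (fst abc) (fst (snd abc)) (snd (snd abc))\<bar>"
          and i = "(W x, Z l x, X l x)" and A = "{..n} \<times> {..n} \<times> {..n}"] by simp
  qed
qed

text \<open>The Stein summand \<open>p^\<ell> g(W+1) - X\<^sub>l g(W)\<close> splits into a decoupled term, in which \<open>g\<close> is
  evaluated at the far part \<open>Z\<^sub>l\<close> independent of \<open>X\<^sub>l\<close>, and a local correction.\<close>

definition decoupled_term :: "(nat \<Rightarrow> real) \<Rightarrow> nat \<Rightarrow> (nat \<Rightarrow> nat) \<Rightarrow> real" where
  "decoupled_term g l x = (p ^ ell - real (X l x)) * g (Z l x + 1)"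

definition local_term :: "(nat \<Rightarrow> real) \<Rightarrow> nat \<Rightarrow> (nat \<Rightarrow> nat) \<Rightarrow> real" where
  "local_term g l x = p ^ ell * (g (W x + 1) - g (Z l x + 1)) + real (X l x) * (g (Z l x + 1) - g (W x))"

lemma stein_summand_split:
  "p ^ ell * g (W x + 1) - real (X l x) * g (W x) = decoupled_term g l x + local_term g l x"
  unfolding decoupled_term_def local_term_def by (simp add: algebra_simps)

lemma integrable_decoupled_term: "l \<in> {1..n} \<Longrightarrow> integrable M (\<lambda>\<omega>. decoupled_term g l (row \<omega>))"
  unfolding decoupled_term_def by (rule integrable_W_Z_X[where F = "\<lambda>w z x. (p ^ ell - real x) * g (z + 1)"])

lemma integrable_local_term: "l \<in> {1..n} \<Longrightarrow> integrable M (\<lambda>\<omega>. local_term g l (row \<omega>))"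
  unfolding local_term_def
  by (rule integrable_W_Z_X[where F = "\<lambda>w z x. p ^ ell * (g (w + 1) - g (z + 1)) + real x * (g (z + 1) - g w)"])

text \<open>Independence of \<open>X\<^sub>l\<close> and \<open>Z\<^sub>l\<close> makes the decoupled term vanish in expectation.\<close>

lemma expectation_decoupled_term:
  assumes l: "l \<in> {1..n}"
  shows "(\<integral>\<omega>. decoupled_term g l (row \<omega>) \<partial>M) = 0"
proof -
  define C where "C = (\<Sum>j\<le>n+1. \<bar>g j\<bar>)"
  define G where "G x = g (Z l x + 1)" for x
  have G_bound: "\<bar>G x\<bar> \<le> C" for x
    unfolding G_def C_def using Z_le[of l x] by (intro member_le_sum) auto
  have integrable_G: "integrable M (\<lambda>\<omega>. G (row \<omega>))"
    unfolding G_def by (rule integrable_W_Z_X[OF l, where F = "\<lambda>w z x. g (z + 1)"])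
  have integrable_XG: "integrable M (\<lambda>\<omega>. real (X l (row \<omega>)) * G (row \<omega>))"
    unfolding G_def by (rule integrable_W_Z_X[OF l, where F = "\<lambda>w z x. real x * g (z + 1)"])
  have indep_XG: "(\<integral>\<omega>. real (X l (row \<omega>)) * G (row \<omega>) \<partial>M)
      = (\<integral>\<omega>. real (X l (row \<omega>)) \<partial>M) * (\<integral>\<omega>. G (row \<omega>) \<partial>M)"
  proof (rule integral_mult_disjoint_coords[OF idx_finite idx_subset far_idx_finite far_idx_subset
        idx_far_idx_disjoint])
    show "l \<ge> 1" using l by simp
    show "real (X l x) = real (X l y)" if "\<forall>i\<in>idx l. x i = y i" for x y
      unfolding X_def using that by (auto intro: all_one_cong)
    show "G x = G y" if "\<forall>i\<in>far_idx l. x i = y i" for x y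
      unfolding G_def using Z_cong_far[OF that] by simp
    show "\<bar>real (X l x)\<bar> \<le> 1" for x using X_le_1[of l x] by simp
    show "\<bar>G x\<bar> \<le> C" for x by (rule G_bound)
  qed
  have "(\<integral>\<omega>. decoupled_term g l (row \<omega>) \<partial>M)
      = p ^ ell * (\<integral>\<omega>. G (row \<omega>) \<partial>M) - (\<integral>\<omega>. real (X l (row \<omega>)) * G (row \<omega>) \<partial>M)"
    unfolding decoupled_term_def G_def[symmetric] left_diff_distrib
    using integrable_G integrable_XG by simp
  also have "\<dots> = 0" unfolding indep_XG expectation_X[OF l] by simp
  finally show ?thesis .
qed

text \<open>Pointwise bound on the local term for \<open>g\<close> with increments at most \<open>D\<close>: writing
  \<open>W = X\<^sub>l + Y + Z\<^sub>l\<close> with \<open>Y\<close> the other summands in the neighbourhood, \<open>g(W+1) - g(Z\<^sub>l+1)\<close> is at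
  most \<open>D (X\<^sub>l + Y)\<close>, and when \<open>X\<^sub>l = 1\<close> the difference \<open>g(Z\<^sub>l+1) - g(W)\<close> is at most \<open>D Y\<close>.\<close>

lemma local_term_pointwise:
  fixes g :: "nat \<Rightarrow> real"
  assumes step: "\<And>m. \<bar>g (Suc (Suc m)) - g (Suc m)\<bar> \<le> D" and l: "l \<in> {1..n}"
  shows "\<bar>local_term g l x\<bar>
    \<le> D * (p ^ ell * (\<Sum>k\<in>nbhd l. real (X k x)) + (\<Sum>k\<in>nbhd l - {l}. real (X l x) * real (X k x)))"
proof -
  define Y where "Y = (\<Sum>k\<in>nbhd l - {l}. X k x)"
  have near: "(\<Sum>k\<in>nbhd l. X k x) = X l x + Y"
    unfolding Y_def using sum.remove[OF nbhd_finite self_in_nbhd[OF l]] by simp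
  have W: "W x = X l x + Y + Z l x" using W_split[OF l] near by simp
  have far_step: "\<bar>g (W x + 1) - g (Z l x + 1)\<bar> \<le> D * real (X l x + Y)"
  proof -
    have "W x + 1 = Suc (Z l x) + (X l x + Y)" using W by simp
    then show ?thesis using increment_telescope[of g D, OF step, of "Z l x" "X l x + Y"] by simp
  qed
  have near_step: "\<bar>real (X l x) * (g (Z l x + 1) - g (W x))\<bar> \<le> D * (real (X l x) * real Y)"
  proof (cases "X l x = 0")
    case False
    then have X1: "X l x = 1" using X_le_1[of l x] by simp
    then have "W x = Suc (Z l x) + Y" using W by simp
    then have "\<bar>g (Z l x + 1) - g (W x)\<bar> = \<bar>g (Suc (Z l x) + Y) - g (Suc (Z l x))\<bar>"
      by (subst abs_minus_commute) simp
    then show ?thesis using increment_telescope[of g D, OF step, of "Z l x" Y] X1 by simp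
  qed simp
  have "\<bar>p ^ ell * (g (W x + 1) - g (Z l x + 1))\<bar> \<le> p ^ ell * (D * real (X l x + Y))"
    using far_step p_pos by (simp add: abs_mult mult_left_mono)
  moreover have "\<bar>local_term g l x\<bar>
      \<le> \<bar>p ^ ell * (g (W x + 1) - g (Z l x + 1))\<bar> + \<bar>real (X l x) * (g (Z l x + 1) - g (W x))\<bar>"
    unfolding local_term_def by (rule abs_triangle_ineq)
  ultimately have "\<bar>local_term g l x\<bar> \<le> p ^ ell * (D * real (X l x + Y)) + D * (real (X l x) * real Y)"
    using near_step by linarith
  also have "\<dots> = D * (p ^ ell * (\<Sum>k\<in>nbhd l. real (X k x)) + (\<Sum>k\<in>nbhd l - {l}. real (X l x) * real (X k x)))"
  proof -
    have "real (X l x + Y) = (\<Sum>k\<in>nbhd l. real (X k x))" unfolding near[symmetric] by simp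
    moreover have "real (X l x) * real Y = (\<Sum>k\<in>nbhd l - {l}. real (X l x) * real (X k x))"
      unfolding Y_def by (simp add: sum_distrib_left)
    ultimately show ?thesis by (simp add: algebra_simps)
  qed
  finally show ?thesis .
qed

lemma nbhd_moment_bounds:
  assumes l: "l \<in> {1..n}"
  shows "(\<Sum>k\<in>nbhd l. \<integral>\<omega>. real (X k (row \<omega>)) \<partial>M) \<le> real ell ^ 2 * p ^ ell"
    and "(\<Sum>k\<in>nbhd l - {l}. \<integral>\<omega>. real (X l (row \<omega>)) * real (X k (row \<omega>)) \<partial>M)
           \<le> real ell ^ 2 * (p ^ ell * p)"
proof -
  have B: "k \<in> {1..n}" if "k \<in> nbhd l" for k using nbhd_subset[of l] that by blast
  have card_B: "real (card (nbhd l)) \<le> real ell ^ 2" "real (card (nbhd l - {l})) \<le> real ell ^ 2"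
    using card_nbhd[of l] l card_mono[OF nbhd_finite, of "nbhd l - {l}" l]
    by (auto simp flip: of_nat_power)
  have "(\<Sum>k\<in>nbhd l. \<integral>\<omega>. real (X k (row \<omega>)) \<partial>M) = real (card (nbhd l)) * p ^ ell"
    using expectation_X B by simp
  then show "(\<Sum>k\<in>nbhd l. \<integral>\<omega>. real (X k (row \<omega>)) \<partial>M) \<le> real ell ^ 2 * p ^ ell"
    using card_B(1) p_pos by (simp add: mult_right_mono)
  have "(\<Sum>k\<in>nbhd l - {l}. \<integral>\<omega>. real (X l (row \<omega>)) * real (X k (row \<omega>)) \<partial>M)
      \<le> (\<Sum>k\<in>nbhd l - {l}. p ^ (ell + 1))"
    using expectation_X_pair B l by (intro sum_mono) auto
  also have "\<dots> \<le> real ell ^ 2 * (p ^ ell * p)"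
    using card_B(2) p_pos by (simp add: mult_right_mono)
  finally show "(\<Sum>k\<in>nbhd l - {l}. \<integral>\<omega>. real (X l (row \<omega>)) * real (X k (row \<omega>)) \<partial>M)
           \<le> real ell ^ 2 * (p ^ ell * p)" .
qed

lemma expectation_local_term:
  fixes g :: "nat \<Rightarrow> real"
  assumes step: "\<And>m. \<bar>g (Suc (Suc m)) - g (Suc m)\<bar> \<le> D" and l: "l \<in> {1..n}"
  shows "\<bar>\<integral>\<omega>. local_term g l (row \<omega>) \<partial>M\<bar> \<le> D * real ell ^ 2 * p ^ ell * (p ^ ell + p)"
proof -
  define B where "B = nbhd l"
  have B: "k \<in> {1..n}" if "k \<in> B" for k using nbhd_subset[of l] that unfolding B_def by blast
  have D: "D \<ge> 0" using step[of 0] by linarith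
  have integrable_bound: "integrable M (\<lambda>\<omega>. p ^ ell * (\<Sum>k\<in>B. real (X k (row \<omega>)))
      + (\<Sum>k\<in>B - {l}. real (X l (row \<omega>)) * real (X k (row \<omega>))))"
    using integrable_X B integrable_X_pair[OF _ l]
    by (intro Bochner_Integration.integrable_add integrable_mult_right Bochner_Integration.integrable_sum)
       auto
  have "\<bar>\<integral>\<omega>. local_term g l (row \<omega>) \<partial>M\<bar> \<le> (\<integral>\<omega>. \<bar>local_term g l (row \<omega>)\<bar> \<partial>M)"
    by (rule integral_abs_bound)
  also have "\<dots> \<le> (\<integral>\<omega>. D * (p ^ ell * (\<Sum>k\<in>B. real (X k (row \<omega>)))
                    + (\<Sum>k\<in>B - {l}. real (X l (row \<omega>)) * real (X k (row \<omega>)))) \<partial>M)"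
    using local_term_pointwise[of g D, OF step l] integrable_local_term[OF l] integrable_bound
    unfolding B_def[symmetric]
    by (intro integral_mono) auto
  also have "\<dots> = D * (p ^ ell * (\<Sum>k\<in>B. \<integral>\<omega>. real (X k (row \<omega>)) \<partial>M)
                    + (\<Sum>k\<in>B - {l}. \<integral>\<omega>. real (X l (row \<omega>)) * real (X k (row \<omega>)) \<partial>M))"
    using integrable_X B integrable_X_pair[OF _ l]
    by (subst integral_mult_right_zero, subst Bochner_Integration.integral_add)
       (auto intro!: integrable_mult_right Bochner_Integration.integrable_sum
             simp: Bochner_Integration.integral_sum)
  also have "\<dots> \<le> D * (p ^ ell * (real ell ^ 2 * p ^ ell) + real ell ^ 2 * (p ^ ell * p))"
    using nbhd_moment_bounds[OF l] D p_pos unfolding B_def by (intro mult_left_mono add_mono) auto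
  finally show ?thesis by (simp add: algebra_simps)
qed

lemma expectation_stein_summand:
  fixes g :: "nat \<Rightarrow> real"
  assumes step: "\<And>m. \<bar>g (Suc (Suc m)) - g (Suc m)\<bar> \<le> D" and l: "l \<in> {1..n}"
  shows "\<bar>\<integral>\<omega>. p ^ ell * g (W (row \<omega>) + 1) - real (X l (row \<omega>)) * g (W (row \<omega>)) \<partial>M\<bar>
           \<le> D * real ell ^ 2 * p ^ ell * (p ^ ell + p)"
  unfolding stein_summand_split
  using expectation_local_term[of g D, OF step l] expectation_decoupled_term[OF l]
    integrable_decoupled_term[OF l] integrable_local_term[OF l]
  by simp

lemma mean_stein_parameter_pos: "real n * p ^ ell > 0"
  using n_pos p_pos by simp

lemma stein_identity_W:
  fixes \<Gamma> :: "nat set" and a :: real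
  defines "g \<equiv> stein_sol (real n * p ^ ell) \<Gamma> a"
  shows "of_bool (W x \<in> \<Gamma>) - a = (\<Sum>l\<in>{1..n}. p ^ ell * g (W x + 1) - real (X l x) * g (W x))"
proof -
  have "(\<Sum>l\<in>{1..n}. p ^ ell * g (W x + 1) - real (X l x) * g (W x))
      = (\<Sum>l\<in>{1..n}. p ^ ell * g (W x + 1)) - (\<Sum>l\<in>{1..n}. real (X l x) * g (W x))"
    by (rule sum_subtractf)
  also have "\<dots> = real n * p ^ ell * g (Suc (W x)) - real (W x) * g (W x)"
    unfolding W_def of_nat_sum sum_distrib_right by simp
  also have "\<dots> = of_bool (W x \<in> \<Gamma>) - a"
    unfolding g_def by (rule stein_equation[OF mean_stein_parameter_pos])
  finally show ?thesis by simp
qed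

lemma prob_W_via_stein_summands:
  fixes \<Gamma> :: "nat set" and a :: real
  defines "g \<equiv> stein_sol (real n * p ^ ell) \<Gamma> a"
  shows "prob {\<omega> \<in> space M. W (row \<omega>) \<in> \<Gamma>} - a
    = (\<Sum>l\<in>{1..n}. \<integral>\<omega>. p ^ ell * g (W (row \<omega>) + 1) - real (X l (row \<omega>)) * g (W (row \<omega>)) \<partial>M)"
proof -
  have integrable_event: "integrable M (\<lambda>\<omega>. of_bool (W (row \<omega>) \<in> \<Gamma>) :: real)"
    using integrable_W_Z_X[where F = "\<lambda>w z x. of_bool (w \<in> \<Gamma>)", of 1] n_pos by simp
  have "(\<integral>\<omega>. of_bool (W (row \<omega>) \<in> \<Gamma>) \<partial>M) = (\<integral>\<omega>. indicator {\<omega> \<in> space M. W (row \<omega>) \<in> \<Gamma>} \<omega> \<partial>M)"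
    by (rule Bochner_Integration.integral_cong) (auto simp: indicator_def)
  also have "\<dots> = prob {\<omega> \<in> space M. W (row \<omega>) \<in> \<Gamma>}"
    using measurable_W by (simp add: integral_indicator measurable_sets_Collect)
  finally have "prob {\<omega> \<in> space M. W (row \<omega>) \<in> \<Gamma>} - a = (\<integral>\<omega>. of_bool (W (row \<omega>) \<in> \<Gamma>) - a \<partial>M)"
    using integrable_event prob_space by (subst Bochner_Integration.integral_diff) auto
  also have "\<dots> = (\<Sum>l\<in>{1..n}. \<integral>\<omega>. p ^ ell * g (W (row \<omega>) + 1) - real (X l (row \<omega>)) * g (W (row \<omega>)) \<partial>M)"
    unfolding stein_identity_W g_def
    by (rule Bochner_Integration.integral_sum, rule integrable_W_Z_X)
  finally show ?thesis .
qed

text \<open>Stein-Chen bound for \<open>W\<close>: with \<open>\<mu> = n p^\<ell>\<close> and \<open>g\<close> the Stein solution for \<open>\<Gamma>\<close>, the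
  equation \<open>\<mu> g(W+1) - W g(W) = [W \<in> \<Gamma>] - P\<^sub>\<mu>(\<Gamma>)\<close> writes \<open>P(W \<in> \<Gamma>) - P\<^sub>\<mu>(\<Gamma>)\<close> as the sum over
  \<open>l\<close> of the expected Stein summands, each bounded with \<open>D = 1/\<mu>\<close>.\<close>

lemma stein_chen_bound:
  "\<bar>prob {\<omega> \<in> space M. W (row \<omega>) \<in> \<Gamma>} - poisson_prob (real n * p ^ ell) \<Gamma>\<bar> \<le> 2 * real ell ^ 2 * p"
proof -
  define \<mu> where "\<mu> = real n * p ^ ell"
  define g where "g = stein_sol \<mu> \<Gamma> (poisson_prob \<mu> \<Gamma>)"
  have step: "\<bar>g (Suc (Suc m)) - g (Suc m)\<bar> \<le> 1 / \<mu>" for m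
    unfolding g_def \<mu>_def by (rule poisson_stein_increment[OF mean_stein_parameter_pos])
  have "\<bar>prob {\<omega> \<in> space M. W (row \<omega>) \<in> \<Gamma>} - poisson_prob \<mu> \<Gamma>\<bar>
      \<le> (\<Sum>l\<in>{1..n}. \<bar>\<integral>\<omega>. p ^ ell * g (W (row \<omega>) + 1) - real (X l (row \<omega>)) * g (W (row \<omega>)) \<partial>M\<bar>)"
    unfolding prob_W_via_stein_summands g_def \<mu>_def by (rule sum_abs)
  also have "\<dots> \<le> (\<Sum>l\<in>{1..n}. 1 / \<mu> * real ell ^ 2 * p ^ ell * (p ^ ell + p))"
    by (intro sum_mono expectation_stein_summand[of g, OF step])
  also have "\<dots> = real ell ^ 2 * (p ^ ell + p)"
    using n_pos p_pos unfolding \<mu>_def by (simp add: field_simps)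
  also have "\<dots> \<le> real ell ^ 2 * (p + p)"
    using power_decreasing[of 1 ell p] ell p_pos p_lt1 by (intro mult_left_mono add_right_mono) auto
  finally show ?thesis unfolding \<mu>_def by simp
qed

text \<open>Almost surely every \<open>\<xi>\<^sub>i\<close> is \<open>0\<close> or \<open>1\<close>, so the product \<open>\<xi>\<^bsub>q\<^sub>1(l)\<^esub> \<cdots> \<xi>\<^bsub>q\<^sub>\<ell>(l)\<^esub>\<close> is \<open>X\<^sub>l\<close> and
  \<open>S\<^sub>n = W\<close>.\<close>

lemma S_stat_eq_prod_idx: "S_stat ell q \<xi> n \<omega> = (\<Sum>l\<in>{1..n}. \<Prod>i\<in>idx l. \<xi> i \<omega>)"
  unfolding S_stat_def
proof (intro sum.cong refl)
  fix l assume "l \<in> {1..n}"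
  then show "(\<Prod>j=1..ell. \<xi> (q j l) \<omega>) = (\<Prod>i\<in>idx l. \<xi> i \<omega>)"
    unfolding idx_def using prod.reindex[OF inj_on_q_index, of l "\<lambda>i. \<xi> i \<omega>"] by simp
qed

lemma measurable_S_stat: "S_stat ell q \<xi> n \<in> measurable M (count_space UNIV)"
proof -
  have "(\<lambda>\<omega>. (\<lambda>x. \<Sum>l\<in>{1..n}. \<Prod>i\<in>idx l. x i) (row \<omega>)) \<in> measurable M (count_space UNIV)"
    by (rule measurable_finite_coords[OF support_finite support_subset])
       (auto intro!: sum.cong prod.cong simp: support_def)
  then show ?thesis unfolding S_stat_eq_prod_idx[abs_def] by simp
qed

lemma S_stat_eq_W_AE: "AE \<omega> in M. S_stat ell q \<xi> n \<omega> = W (row \<omega>)"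
proof -
  have "AE \<omega> in M. \<forall>i\<in>support. \<xi> i \<omega> \<in> {0, 1}"
    using support_finite support_subset coord_01_AE by (intro AE_finite_allI) auto
  then show ?thesis
  proof eventually_elim
    case (elim \<omega>)
    then show ?case
      unfolding S_stat_eq_prod_idx W_def X_def support_def
      by (intro sum.cong refl prod_01_eq_all_one idx_finite) auto
  qed
qed

lemma prob_S_stat_eq_W:
  "prob {\<omega> \<in> space M. S_stat ell q \<xi> n \<omega> \<in> \<Gamma>} = prob {\<omega> \<in> space M. W (row \<omega>) \<in> \<Gamma>}"
proof (rule measure_eq_AE)
  show "AE \<omega> in M. (\<omega> \<in> {\<omega> \<in> space M. S_stat ell q \<xi> n \<omega> \<in> \<Gamma>}) = (\<omega> \<in> {\<omega> \<in> space M. W (row \<omega>) \<in> \<Gamma>})"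
    using S_stat_eq_W_AE by eventually_elim auto
  show "{\<omega> \<in> space M. S_stat ell q \<xi> n \<omega> \<in> \<Gamma>} \<in> sets M"
    using measurable_S_stat by (rule measurable_sets_Collect) simp
  show "{\<omega> \<in> space M. W (row \<omega>) \<in> \<Gamma>} \<in> sets M"
    using measurable_W by (rule measurable_sets_Collect) simp
qed

lemma poisson_approximation:
  assumes lam: "lam > 0"
  shows "\<bar>prob {\<omega> \<in> space M. S_stat ell q \<xi> n \<omega> \<in> \<Gamma>} - poisson_prob lam \<Gamma>\<bar>
     \<le> (2 * real ell ^ 2 + 1) * p + 2 * \<bar>lam - real n * p ^ ell\<bar> * exp (max lam (real n * p ^ ell))"
proof -
  have "\<bar>prob {\<omega> \<in> space M. S_stat ell q \<xi> n \<omega> \<in> \<Gamma>} - poisson_prob lam \<Gamma>\<bar>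
      \<le> \<bar>prob {\<omega> \<in> space M. W (row \<omega>) \<in> \<Gamma>} - poisson_prob (real n * p ^ ell) \<Gamma>\<bar>
        + \<bar>poisson_prob (real n * p ^ ell) \<Gamma> - poisson_prob lam \<Gamma>\<bar>"
    unfolding prob_S_stat_eq_W by linarith
  also have "\<dots> \<le> 2 * real ell ^ 2 * p + 2 * \<bar>lam - real n * p ^ ell\<bar> * exp (max lam (real n * p ^ ell))"
    by (intro add_mono stein_chen_bound poisson_prob_parameter_diff[OF mean_stein_parameter_pos lam])
  finally show ?thesis using p_pos by (simp add: algebra_simps)
qed

end

text \<open>If \<open>n p\<^sub>n^\<ell> \<rightarrow> \<lambda>\<close> then \<open>p\<^sub>n^\<ell> \<rightarrow> 0\<close>, hence \<open>p\<^sub>n \<rightarrow> 0\<close>, and the error bound tends to \<open>0\<close>.\<close>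

lemma error_bound_tendsto_zero:
  fixes p :: "nat \<Rightarrow> real" and ell :: nat
  assumes ell: "ell \<ge> 1" and p_nonneg: "\<forall>n\<ge>1. 0 \<le> p n"
    and lim: "(\<lambda>n. real n * p n ^ ell) \<longlonglongrightarrow> lam"
  shows "(\<lambda>n. (2 * real ell ^ 2 + 1) * p n
            + 2 * \<bar>lam - real n * p n ^ ell\<bar> * exp (max lam (real n * p n ^ ell))) \<longlonglongrightarrow> 0"
proof -
  have "(\<lambda>n. real n * p n ^ ell * inverse (real n)) \<longlonglongrightarrow> lam * 0"
    by (intro tendsto_mult lim tendsto_inverse_0_at_top filterlim_real_sequentially)
  moreover have "eventually (\<lambda>n. real n * p n ^ ell * inverse (real n) = p n ^ ell) sequentially"
    using eventually_ge_at_top[of "1::nat"] by eventually_elim auto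
  ultimately have "(\<lambda>n. p n ^ ell) \<longlonglongrightarrow> 0" by (simp add: tendsto_cong)
  then have "(\<lambda>n. root ell (p n ^ ell)) \<longlonglongrightarrow> root ell 0" by (rule tendsto_real_root)
  moreover have "eventually (\<lambda>n. root ell (p n ^ ell) = p n) sequentially"
    using eventually_ge_at_top[of "1::nat"]
    by eventually_elim (use p_nonneg ell in \<open>auto intro!: real_root_power_cancel\<close>)
  ultimately have "p \<longlonglongrightarrow> 0" by (simp add: tendsto_cong)
  then have "(\<lambda>n. (2 * real ell ^ 2 + 1) * p n
            + 2 * \<bar>lam - real n * p n ^ ell\<bar> * exp (max lam (real n * p n ^ ell)))
      \<longlonglongrightarrow> (2 * real ell ^ 2 + 1) * 0 + 2 * \<bar>lam - lam\<bar> * exp (max lam lam)"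
    by (intro tendsto_intros lim)
  then show ?thesis by simp
qed

text \<open>A uniform bound on \<open>|P(S\<^sub>n \<in> \<Gamma>) - P\<^sub>\<lambda>(\<Gamma>)|\<close> that tends to \<open>0\<close> gives convergence of the
  distribution functions at every point, i.e. weak convergence to the Poisson law.\<close>

lemma weak_conv_poisson_of_uniform_bound:
  fixes N :: "nat \<Rightarrow> 'a measure" and S :: "nat \<Rightarrow> 'a \<Rightarrow> nat" and b :: "nat \<Rightarrow> real"
  assumes meas: "\<And>n. n \<ge> 1 \<Longrightarrow> S n \<in> measurable (N n) (count_space UNIV)"
    and bound: "\<And>n \<Gamma>. n \<ge> 1 \<Longrightarrow>
      \<bar>measure (N n) {\<omega> \<in> space (N n). S n \<omega> \<in> \<Gamma>} - poisson_prob lam \<Gamma>\<bar> \<le> b n"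
    and b: "b \<longlonglongrightarrow> 0"
  shows "weak_conv_m (\<lambda>n. distr (N n) borel (\<lambda>\<omega>. real (S n \<omega>)))
                     (distr (measure_pmf (poisson_pmf lam)) borel real)"
  unfolding weak_conv_m_def weak_conv_def
proof (intro allI impI)
  fix x :: real
  define G where "G = {k::nat. real k \<le> x}"
  have cdf_poisson: "cdf (distr (measure_pmf (poisson_pmf lam)) borel real) x = poisson_prob lam G"
    unfolding cdf_def poisson_prob_def G_def
    by (subst measure_distr) (auto intro!: arg_cong[where f = "measure _"])
  have cdf_S: "cdf (distr (N n) borel (\<lambda>\<omega>. real (S n \<omega>))) x
      = measure (N n) {\<omega> \<in> space (N n). S n \<omega> \<in> G}" if "n \<ge> 1" for n
  proof -
    have "(\<lambda>\<omega>. real (S n \<omega>)) \<in> borel_measurable (N n)"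
      using measurable_compose[OF meas[OF that], of real borel] by simp
    then show ?thesis
      unfolding cdf_def G_def by (subst measure_distr) (auto intro!: arg_cong[where f = "measure _"])
  qed
  have "(\<lambda>n. cdf (distr (N n) borel (\<lambda>\<omega>. real (S n \<omega>))) x - poisson_prob lam G) \<longlonglongrightarrow> 0"
  proof (rule Lim_null_comparison[OF _ b])
    show "eventually (\<lambda>n. norm (cdf (distr (N n) borel (\<lambda>\<omega>. real (S n \<omega>))) x
        - poisson_prob lam G) \<le> b n) sequentially"
      using eventually_ge_at_top[of "1::nat"] by eventually_elim (simp add: cdf_S bound)
  qed
  then show "(\<lambda>n. cdf (distr (N n) borel (\<lambda>\<omega>. real (S n \<omega>))) x)
      \<longlonglongrightarrow> cdf (distr (measure_pmf (poisson_pmf lam)) borel real) x"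
    unfolding cdf_poisson by (rule LIM_zero_cancel)
qed

theorem theorem2p1:
  fixes ell :: nat
    and q :: "nat \<Rightarrow> nat \<Rightarrow> nat"
    and p :: "nat \<Rightarrow> real"
    and M :: "nat \<Rightarrow> 'a measure"
    and \<xi> :: "nat \<Rightarrow> nat \<Rightarrow> 'a \<Rightarrow> nat"
  assumes ell: "ell \<ge> 1"
    and q_incr: "\<forall>j\<in>{1..ell}. strict_mono_on {1..} (q j)"
    and q_first: "\<forall>l\<ge>1. l \<le> q 1 l"
    and q_chain: "\<forall>l\<ge>1. \<forall>j\<in>{1..<ell}. q j l < q (Suc j) l"
    and prob: "\<forall>n\<ge>1. prob_space (M n)"
    and p_range: "\<forall>n\<ge>1. 0 < p n \<and> p n < 1"
    and indep: "\<forall>n\<ge>1. prob_space.indep_vars (M n) (\<lambda>_. count_space UNIV) (\<xi> n) {1..}"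
    and bern: "\<forall>n\<ge>1. \<forall>i\<ge>1.
                 measure (M n) {\<omega> \<in> space (M n). \<xi> n i \<omega> = 1} = p n \<and>
                 measure (M n) {\<omega> \<in> space (M n). \<xi> n i \<omega> = 0} = 1 - p n"
  shows "(\<forall>lam>0. \<forall>n\<ge>1. \<forall>\<Gamma> :: nat set.
            \<bar>measure (M n) {\<omega> \<in> space (M n). S_stat ell q (\<xi> n) n \<omega> \<in> \<Gamma>} - poisson_prob lam \<Gamma>\<bar>
              \<le> (2 * real ell ^ 2 + 1) * p n
                 + 2 * \<bar>lam - real n * p n ^ ell\<bar> * exp (max lam (real n * p n ^ ell)))
       \<and> (\<forall>lam>0. (\<lambda>n. real n * p n ^ ell) \<longlonglongrightarrow> lam \<longrightarrow>
            ((\<lambda>n. (2 * real ell ^ 2 + 1) * p n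
                 + 2 * \<bar>lam - real n * p n ^ ell\<bar> * exp (max lam (real n * p n ^ ell))) \<longlonglongrightarrow> 0)
            \<and> weak_conv_m (\<lambda>n. distr (M n) borel (\<lambda>\<omega>. real (S_stat ell q (\<xi> n) n \<omega>)))
                          (distr (measure_pmf (poisson_pmf lam)) borel real))"
proof -
  have scan: "scan_statistic (M n) (\<xi> n) (p n) ell q n" if n: "n \<ge> 1" for n
  proof -
    interpret prob_space "M n" using prob n by blast
    show ?thesis by unfold_locales (use assms n in auto)
  qed
  have bound: "\<bar>measure (M n) {\<omega> \<in> space (M n). S_stat ell q (\<xi> n) n \<omega> \<in> \<Gamma>} - poisson_prob lam \<Gamma>\<bar>
      \<le> (2 * real ell ^ 2 + 1) * p n
         + 2 * \<bar>lam - real n * p n ^ ell\<bar> * exp (max lam (real n * p n ^ ell))"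
    if "lam > 0" "n \<ge> 1" for lam n \<Gamma>
    using scan_statistic.poisson_approximation[OF scan[OF that(2)] that(1)] .
  have limit: "((\<lambda>n. (2 * real ell ^ 2 + 1) * p n
                 + 2 * \<bar>lam - real n * p n ^ ell\<bar> * exp (max lam (real n * p n ^ ell))) \<longlonglongrightarrow> 0)
            \<and> weak_conv_m (\<lambda>n. distr (M n) borel (\<lambda>\<omega>. real (S_stat ell q (\<xi> n) n \<omega>)))
                          (distr (measure_pmf (poisson_pmf lam)) borel real)"
    if "lam > 0" "(\<lambda>n. real n * p n ^ ell) \<longlonglongrightarrow> lam" for lam
    using error_bound_tendsto_zero[OF ell _ that(2)] p_range
      weak_conv_poisson_of_uniform_bound[OF scan_statistic.measurable_S_stat[OF scan] bound[OF that(1)]]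
    by (simp add: less_imp_le)
  show ?thesis using bound limit by blast
qed

end
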